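(* Let $G$ be a connected graph on $X$. For every $k\ge1$, the collection $\mathcal C_k$ is chain-vanishing. In particular, if $G$ is multi-ended, the collection of thin cuts is chain-vanishing.
   Context: A graph on $X$ is an irreflexive symmetric relation $G\subseteq X^2$. For $A\subseteq X$, $\delta A$ is the set of edges with one endpoint in $A$ and the other in $X\setminus A$. A cut is a set $A\subseteq X$ with $A$ and $X\setminus A$ infinite and $\delta A$ finite; $G$ is multi-ended if it has a cut; a cut is thin if $|\delta A|$ is minimal among all cuts. A cut $A$ is neat if the induced subgraphs on $A$ and on $X\setminus A$ are connected; $\mathcal C_k$ is the set of neat cuts $A$ with $|\delta A|=k$. A chain is a sequence $(A_n)_{n\in\mathbb N}$ strictly increasing or strictly decreasing under inclusion. For a collection $\mathcal S$ of subsets, a decreasing (resp. increasing) chain is $\mathcal S$-vanishing if there is no $B\in\mathcal S$ with $B\subseteq A_n$ (resp. $B\cap A_n=\emptyset$) for all $n$; $\mathcal S$ is chain-vanishing if every chain of members of $\mathcal S$ is $\mathcal S$-vanishing. *)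

theory Defs
  imports Main
begin

text \<open>A graph on the vertex set X (taken to be the whole type 'a) is an
irreflexive symmetric relation.\<close>
definition graph :: "('a \<times> 'a) set \<Rightarrow> bool" where
  "graph G \<longleftrightarrow> irrefl G \<and> sym G"

definition connected_graph :: "('a \<times> 'a) set \<Rightarrow> bool" where
  "connected_graph G \<longleftrightarrow> graph G \<and> (\<forall>x y. (x, y) \<in> G\<^sup>*)"

definition induced_connected :: "('a \<times> 'a) set \<Rightarrow> 'a set \<Rightarrow> bool" where
  "induced_connected G A \<longleftrightarrow> (\<forall>x\<in>A. \<forall>y\<in>A. (x, y) \<in> (G \<inter> (A \<times> A))\<^sup>*)"

text \<open>Edge boundary: each (unordered) edge between A and its complement is
represented once, as the ordered pair with first component in A.\<close>
definition delta :: "('a \<times> 'a) set \<Rightarrow> 'a set \<Rightarrow> ('a \<times> 'a) set" where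
  "delta G A = {(x, y). (x, y) \<in> G \<and> x \<in> A \<and> y \<notin> A}"

definition is_cut :: "('a \<times> 'a) set \<Rightarrow> 'a set \<Rightarrow> bool" where
  "is_cut G A \<longleftrightarrow> infinite A \<and> infinite (- A) \<and> finite (delta G A)"

definition multi_ended :: "('a \<times> 'a) set \<Rightarrow> bool" where
  "multi_ended G \<longleftrightarrow> (\<exists>A. is_cut G A)"

definition thin_cut :: "('a \<times> 'a) set \<Rightarrow> 'a set \<Rightarrow> bool" where
  "thin_cut G A \<longleftrightarrow> is_cut G A \<and> (\<forall>B. is_cut G B \<longrightarrow> card (delta G A) \<le> card (delta G B))"

definition neat_cut :: "('a \<times> 'a) set \<Rightarrow> 'a set \<Rightarrow> bool" where
  "neat_cut G A \<longleftrightarrow> is_cut G A \<and> induced_connected G A \<and> induced_connected G (- A)"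

definition neat_cuts :: "('a \<times> 'a) set \<Rightarrow> nat \<Rightarrow> 'a set set" where
  "neat_cuts G k = {A. neat_cut G A \<and> card (delta G A) = k}"

definition incr_chain :: "(nat \<Rightarrow> 'a set) \<Rightarrow> bool" where
  "incr_chain A \<longleftrightarrow> (\<forall>n. A n \<subset> A (Suc n))"

definition decr_chain :: "(nat \<Rightarrow> 'a set) \<Rightarrow> bool" where
  "decr_chain A \<longleftrightarrow> (\<forall>n. A (Suc n) \<subset> A n)"

definition chain_seq :: "(nat \<Rightarrow> 'a set) \<Rightarrow> bool" where
  "chain_seq A \<longleftrightarrow> incr_chain A \<or> decr_chain A"

definition vanishing :: "'a set set \<Rightarrow> (nat \<Rightarrow> 'a set) \<Rightarrow> bool" where
  "vanishing S A \<longleftrightarrow>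
     (decr_chain A \<longrightarrow> \<not> (\<exists>B\<in>S. \<forall>n. B \<subseteq> A n)) \<and>
     (incr_chain A \<longrightarrow> \<not> (\<exists>B\<in>S. \<forall>n. B \<inter> A n = {}))"

definition chain_vanishing :: "'a set set \<Rightarrow> bool" where
  "chain_vanishing S \<longleftrightarrow> (\<forall>A. chain_seq A \<and> (\<forall>n. A n \<in> S) \<longrightarrow> vanishing S A)"

end

theory Submission
  imports Defs "HOL-Library.Infinite_Set"
begin

text \<open>Suppose a decreasing chain of neat cuts with at most k boundary edges had a point b in
every member, and let c lie outside the first one. A path from b to c uses finitely many
edges and crosses every boundary, so by pigeonhole one of its edges lies in the boundary of
all cuts from some index on. Deleting that edge leaves both sides of every later cut
untouched, so they stay connected, b and c remain joined through them, and each boundary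
loses an edge; after k+1 deletions a boundary would have to be empty although a path still
crosses it. Increasing chains reduce to decreasing ones by complementation, and thin cuts are
neat because splitting a side into two non-adjacent parts would yield a cut with a strictly
smaller boundary.\<close>

lemma rtrancl_finite_support:
  assumes "(b, c) \<in> R\<^sup>*"
  obtains F where "finite F" "F \<subseteq> R" "(b, c) \<in> F\<^sup>*"
proof -
  from assms have "\<exists>F. finite F \<and> F \<subseteq> R \<and> (b, c) \<in> F\<^sup>*"
  proof (induction rule: rtrancl_induct)
    case base
    show ?case by blast
  next
    case (step y z)
    then obtain F where "finite F" "F \<subseteq> R" "(b, y) \<in> F\<^sup>*" by blast
    then have "(b, z) \<in> (insert (y, z) F)\<^sup>*"
      by (meson insertI1 rtrancl_into_rtrancl rtrancl_mono subset_insertI subsetD)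
    with \<open>finite F\<close> \<open>F \<subseteq> R\<close> \<open>(y, z) \<in> R\<close> show ?case
      by (intro exI[of _ "insert (y, z) F"]) auto
  qed
  with that show thesis by blast
qed

lemma rtrancl_leaving_delta_nonempty:
  assumes "(b, c) \<in> R\<^sup>*" "b \<in> A" "c \<notin> A"
  shows "delta R A \<noteq> {}"
  using assms
proof (induction rule: rtrancl_induct)
  case (step y z)
  then show ?case by (cases "y \<in> A") (auto simp: delta_def)
qed simp

lemma delta_mono: "F \<subseteq> G \<Longrightarrow> delta F A \<subseteq> delta G A"
  unfolding delta_def by auto

lemma delta_Compl: "sym G \<Longrightarrow> delta G (- A) = prod.swap ` delta G A"
  unfolding delta_def sym_def by (auto simp: image_iff)

lemma finite_card_delta_Compl:
  assumes "sym G"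
  shows "finite (delta G (- A)) \<longleftrightarrow> finite (delta G A)"
    and "card (delta G (- A)) = card (delta G A)"
  by (simp_all add: delta_Compl[OF assms] card_image finite_image_iff)

lemma induced_connected_rtrancl:
  "induced_connected G S \<Longrightarrow> x \<in> S \<Longrightarrow> y \<in> S \<Longrightarrow> (x, y) \<in> G\<^sup>*"
  unfolding induced_connected_def by (meson inf_le1 rtrancl_mono subsetD)

lemma connected_graph_sym: "connected_graph G \<Longrightarrow> sym G"
  unfolding connected_graph_def graph_def by simp

lemma connected_graph_rtrancl: "connected_graph G \<Longrightarrow> (x, y) \<in> G\<^sup>*"
  unfolding connected_graph_def by simp

lemma neat_cut_Compl: "sym G \<Longrightarrow> neat_cut G A \<Longrightarrow> neat_cut G (- A)"
  unfolding neat_cut_def is_cut_def by (simp add: finite_card_delta_Compl)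

lemma decr_chain_common_boundary_edge:
  assumes decr: "\<And>n. A (Suc n) \<subseteq> A n"
    and "finite F"
    and meets: "\<And>n. F \<inter> delta G (A n) \<noteq> {}"
  shows "\<exists>x y N. \<forall>n\<ge>N. (x, y) \<in> delta G (A n)"
proof -
  have "\<forall>n. \<exists>e. e \<in> F \<inter> delta G (A n)"
    using meets by blast
  then obtain f where f: "\<And>n. f n \<in> F \<inter> delta G (A n)"
    by metis
  have "finite (range f)"
    using f \<open>finite F\<close> by (meson IntD1 finite_subset image_subsetI)
  then obtain n0 where often: "infinite {n. f n = f n0}"
    using pigeonhole_infinite[of UNIV f] by auto
  obtain x y where xy: "f n0 = (x, y)" by fastforce
  have "x \<in> A n" for n
  proof -
    obtain m where "n \<le> m" "f m = (x, y)"
      using often xy by (auto simp: infinite_nat_iff_unbounded_le)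
    with f[of m] lift_Suc_antimono_le[of A, OF decr] show ?thesis
      by (auto simp: delta_def)
  qed
  moreover have "y \<notin> A n" "(x, y) \<in> G" if "n0 \<le> n" for n
    using f[of n0] xy lift_Suc_antimono_le[of A, OF decr that] by (auto simp: delta_def)
  ultimately show ?thesis
    by (intro exI[of _ x] exI[of _ y] exI[of _ n0]) (auto simp: delta_def)
qed

lemma boundary_edge_removal:
  assumes "(x, y) \<in> delta G S"
  shows "delta (G - {(x, y), (y, x)}) S = delta G S - {(x, y)}"
    and "induced_connected (G - {(x, y), (y, x)}) S \<longleftrightarrow> induced_connected G S"
    and "induced_connected (G - {(x, y), (y, x)}) (- S) \<longleftrightarrow> induced_connected G (- S)"
proof -
  have "(G - {(x, y), (y, x)}) \<inter> (T \<times> T) = G \<inter> (T \<times> T)" if "T = S \<or> T = - S" for T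
    using assms that by (auto simp: delta_def)
  then show "induced_connected (G - {(x, y), (y, x)}) S \<longleftrightarrow> induced_connected G S"
    and "induced_connected (G - {(x, y), (y, x)}) (- S) \<longleftrightarrow> induced_connected G (- S)"
    unfolding induced_connected_def by metis+
  show "delta (G - {(x, y), (y, x)}) S = delta G S - {(x, y)}"
    using assms by (auto simp: delta_def)
qed

lemma decr_chain_separates:
  assumes "\<And>n. A (Suc n) \<subset> A n"
    and "\<And>n. finite (delta G (A n)) \<and> card (delta G (A n)) \<le> k"
    and "\<And>n. induced_connected G (A n) \<and> induced_connected G (- A n)"
    and "\<And>n. b \<in> A n" and "c \<notin> A 0"
  shows "(b, c) \<notin> G\<^sup>*"
  using assms
proof (induction k arbitrary: G A)
  case 0
  have "delta G (A 0) = {}"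
    using "0.prems"(2)[of 0] card_0_eq by blast
  then show ?case
    using rtrancl_leaving_delta_nonempty[OF _ "0.prems"(4) "0.prems"(5)] by blast
next
  case (Suc k G A)
  have step: "A (Suc n) \<subseteq> A n" for n
    using Suc.prems(1) by (rule psubset_imp_subset)
  then have decr: "A m \<subseteq> A n" if "n \<le> m" for m n
    using lift_Suc_antimono_le[of A, OF _ that] by blast
  have outside: "c \<notin> A n" for n
    using decr[of 0 n] Suc.prems(5) by auto
  show ?case
  proof
    assume "(b, c) \<in> G\<^sup>*"
    then obtain F where F: "finite F" "F \<subseteq> G" "(b, c) \<in> F\<^sup>*"
      by (rule rtrancl_finite_support)
    have meets: "F \<inter> delta G (A n) \<noteq> {}" for n
      using rtrancl_leaving_delta_nonempty[OF F(3) Suc.prems(4) outside] delta_mono[OF F(2)]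
      by (auto simp: delta_def)
    obtain x y N where xy: "\<forall>n\<ge>N. (x, y) \<in> delta G (A n)"
      using decr_chain_common_boundary_edge[of A F G, OF step F(1) meets] by blast
    define G' where "G' = G - {(x, y), (y, x)}"
    define A' where "A' n = A (n + N)" for n
    have xy': "(x, y) \<in> delta G (A' n)" for n
      using xy by (simp add: A'_def)
    note removal = boundary_edge_removal[OF xy', folded G'_def]
    have chain': "A' (Suc n) \<subset> A' n" for n
      using Suc.prems(1) by (simp add: A'_def)
    have bound: "finite (delta G (A' n)) \<and> card (delta G (A' n)) \<le> Suc k" for n
      using Suc.prems(2) by (simp add: A'_def)
    have bound': "finite (delta G' (A' n)) \<and> card (delta G' (A' n)) \<le> k" for n
      using bound[of n] xy'[of n] by (auto simp: removal card_Diff_singleton)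
    have "induced_connected G (A' n) \<and> induced_connected G (- A' n)" for n
      using Suc.prems(3) by (simp add: A'_def)
    then have connected': "induced_connected G' (A' n) \<and> induced_connected G' (- A' n)" for n
      by (simp add: removal)
    have inside': "b \<in> A' n" and outside': "c \<notin> A' n" for n
      using Suc.prems(4) outside by (simp_all add: A'_def)
    obtain d where d: "d \<in> A' 0" "d \<notin> A' 1"
      using chain'[of 0] by auto
    have "(b, d) \<in> G'\<^sup>*"
      using induced_connected_rtrancl[of G' "A' 0" b d] connected'[of 0] inside'[of 0] d by blast
    moreover have "(d, c) \<in> G'\<^sup>*"
      using induced_connected_rtrancl[of G' "- A' 1" d c] connected'[of 1] outside'[of 1] d by blast
    ultimately have "(b, c) \<in> G'\<^sup>*" by simp
    with Suc.IH[where A = A' and G = G', OF chain' bound' connected' inside' outside'[of 0]]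
    show False by blast
  qed
qed

lemma decr_chain_neat_cuts_Inter_empty:
  assumes "connected_graph G" "decr_chain A"
    and neat: "\<And>n. neat_cut G (A n) \<and> card (delta G (A n)) \<le> k"
  shows "(\<Inter>n. A n) = {}"
proof -
  have "- A 0 \<noteq> {}"
    using neat[of 0] unfolding neat_cut_def is_cut_def by auto
  then obtain c where "c \<notin> A 0" by blast
  have decr: "\<And>n. A (Suc n) \<subset> A n"
    using assms(2) by (simp add: decr_chain_def)
  have bound: "\<And>n. finite (delta G (A n)) \<and> card (delta G (A n)) \<le> k"
    and connected: "\<And>n. induced_connected G (A n) \<and> induced_connected G (- A n)"
    using neat by (simp_all add: neat_cut_def is_cut_def)
  show ?thesis
  proof (rule equals0I)
    fix b assume "b \<in> (\<Inter>n. A n)"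
    then have "(b, c) \<notin> G\<^sup>*"
      by (intro decr_chain_separates[OF decr bound connected _ \<open>c \<notin> A 0\<close>]) simp
    with connected_graph_rtrancl[OF assms(1)] show False by simp
  qed
qed

lemma chain_vanishing_bounded_neat_cuts:
  assumes G: "connected_graph G"
    and S: "\<And>A. A \<in> S \<Longrightarrow> neat_cut G A \<and> card (delta G A) \<le> k"
  shows "chain_vanishing S"
  unfolding chain_vanishing_def vanishing_def
proof (intro allI impI conjI notI)
  fix A assume "chain_seq A \<and> (\<forall>n. A n \<in> S)"
  then have members: "neat_cut G (A n) \<and> card (delta G (A n)) \<le> k" for n
    using S by blast
  have nonempty: "B \<noteq> {}" if "B \<in> S" for B
    using S[OF that] unfolding neat_cut_def is_cut_def by auto
  {
    assume "decr_chain A" and "\<exists>B\<in>S. \<forall>n. B \<subseteq> A n"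
    with decr_chain_neat_cuts_Inter_empty[OF G, of A k] members nonempty show False by blast
  next
    assume "incr_chain A" and "\<exists>B\<in>S. \<forall>n. B \<inter> A n = {}"
    moreover have "decr_chain (\<lambda>n. - A n)"
      using \<open>incr_chain A\<close> unfolding incr_chain_def decr_chain_def by blast
    moreover have "neat_cut G (- A n) \<and> card (delta G (- A n)) \<le> k" for n
      using members[of n] neat_cut_Compl[OF connected_graph_sym[OF G]]
        finite_card_delta_Compl[OF connected_graph_sym[OF G]] by simp
    ultimately show False
      using decr_chain_neat_cuts_Inter_empty[OF G, of "\<lambda>n. - A n" k] nonempty by blast
  }
qed

lemma thin_cut_Compl: "sym G \<Longrightarrow> thin_cut G A \<Longrightarrow> thin_cut G (- A)"
  unfolding thin_cut_def is_cut_def by (simp add: finite_card_delta_Compl)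

lemma thin_cut_no_split:
  assumes G: "connected_graph G" and thin: "thin_cut G A"
    and split: "A = C \<union> D" "C \<inter> D = {}" "C \<noteq> {}" "D \<noteq> {}"
    and no_edges: "G \<inter> (C \<times> D) = {}" "G \<inter> (D \<times> C) = {}"
  shows False
proof -
  have cut: "is_cut G A" using thin by (simp add: thin_cut_def)
  then have "- A \<noteq> {}"
    unfolding is_cut_def by auto
  then obtain w where "w \<notin> A" by blast
  have card_less: "card (delta G E) < card (delta G A)" and delta_subset: "delta G E \<subseteq> delta G A"
    if "E = C \<or> E = D" for E
  proof -
    have parts: "delta G C \<subseteq> delta G A" "delta G D \<subseteq> delta G A" "delta G C \<inter> delta G D = {}"
      using split no_edges by (auto simp: delta_def)
    have "delta G C \<noteq> {}" "delta G D \<noteq> {}"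
      using split \<open>w \<notin> A\<close> connected_graph_rtrancl[OF G]
      by (meson Un_iff ex_in_conv rtrancl_leaving_delta_nonempty)+
    with parts have "delta G E \<subset> delta G A" using that by blast
    then show "card (delta G E) < card (delta G A)" "delta G E \<subseteq> delta G A"
      using cut by (auto simp: is_cut_def psubset_card_mono)
  qed
  obtain E where E: "E = C \<or> E = D" "infinite E"
    using cut split(1) unfolding is_cut_def by auto
  then have "E \<subseteq> A" using split(1) by blast
  then have "is_cut G E"
    using cut E delta_subset[OF E(1)] unfolding is_cut_def
    by (meson compl_le_compl_iff finite_subset)
  with thin card_less[OF E(1)] show False
    unfolding thin_cut_def by (meson not_le)
qed

lemma thin_cut_induced_connected:
  assumes G: "connected_graph G" and thin: "thin_cut G A"
  shows "induced_connected G A"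
  unfolding induced_connected_def
proof (intro ballI, rule ccontr)
  fix x y assume "x \<in> A" "y \<in> A" and "(x, y) \<notin> (G \<inter> A \<times> A)\<^sup>*"
  define C where "C = {z \<in> A. (x, z) \<in> (G \<inter> A \<times> A)\<^sup>*}"
  have "G \<inter> (C \<times> (A - C)) = {}"
    unfolding C_def by (auto intro: rtrancl_into_rtrancl)
  moreover from this have "G \<inter> ((A - C) \<times> C) = {}"
    using connected_graph_sym[OF G] unfolding sym_def by blast
  moreover have "x \<in> C" "y \<in> A - C"
    using \<open>x \<in> A\<close> \<open>y \<in> A\<close> \<open>(x, y) \<notin> _\<close> by (auto simp: C_def)
  ultimately show False
    using thin_cut_no_split[OF G thin, of C "A - C"] C_def by blast
qed

lemma thin_cut_neat:
  assumes "connected_graph G" "thin_cut G A"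
  shows "neat_cut G A"
  using assms thin_cut_induced_connected thin_cut_Compl[OF connected_graph_sym]
  unfolding neat_cut_def thin_cut_def by blast

theorem mainTheorem15:
  fixes G :: "('a \<times> 'a) set"
  assumes "connected_graph G"
  shows "(\<forall>k::nat. k \<ge> 1 \<longrightarrow> chain_vanishing (neat_cuts G k))
         \<and> (multi_ended G \<longrightarrow> chain_vanishing {A. thin_cut G A})"
proof (intro conjI allI impI)
  fix k :: nat
  show "chain_vanishing (neat_cuts G k)"
    by (rule chain_vanishing_bounded_neat_cuts[OF assms, of _ k]) (simp add: neat_cuts_def)
next
  show "chain_vanishing {A. thin_cut G A}"
  proof (cases "\<exists>A0. thin_cut G A0")
    case False
    then show ?thesis unfolding chain_vanishing_def by auto
  next
    case True
    then obtain A0 where A0: "thin_cut G A0" by blast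
    show ?thesis
    proof (rule chain_vanishing_bounded_neat_cuts[OF assms])
      fix A assume "A \<in> {A. thin_cut G A}"
      then have "thin_cut G A" by simp
      moreover have "is_cut G A0" using A0 by (simp add: thin_cut_def)
      ultimately show "neat_cut G A \<and> card (delta G A) \<le> card (delta G A0)"
        using thin_cut_neat[OF assms] unfolding thin_cut_def by blast
    qed
  qed
qed

end
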